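(* On the good event $\mathcal E$ (defined in the context), for every integer $k$ with $C''\le k\le K$ and every policy $\pi$, $$\hat V_1^\pi(\mu;\tilde c^k,\hat P^k)\le V_1^\pi(\mu;c,P).$$
   Context: Episodic constrained MDP. $\mathcal S,\mathcal A$ finite, $H\ge1$ integer. For each $h\in[H]$, $(s,a)$: unknown transition distribution $P_h(\cdot\mid s,a)$, unknown mean reward $r_h(s,a)\in[0,1]$, unknown mean cost $c_h(s,a)\in[0,1]$. Known initial distribution $\mu$, threshold $\tau\in(0,H]$. Policies are randomized Markov. $V_h^\pi(s;g,P'):=\mathbb E_{P',\pi}[\sum_{t=h}^Hg_t(S_t,A_t)\mid S_h=s]$, $V_1^\pi(\mu;g,P'):=\mathbb E_{S_1\sim\mu}V_1^\pi(S_1;g,P')$. There exists a policy $\pi^0$ with $V_1^{\pi^0}(\mu;c,P)=c^0<\tau$, $c^0$ known. Interaction over $K$ episodes: in episode $k$, $\pi^k$ is $\mathcal F_{k-1}$-measurable; $S_1^k\sim\mu$, $A_h^k\sim\pi_h^k(\cdot\mid S_h^k)$, observed $R_h^k=r_h(S_h^k,A_h^k)+\text{noise}$, $C_h^k=c_h(S_h^k,A_h^k)+\text{noise}$, $S_{h+1}^k\sim P_h(\cdot\mid S_h^k,A_h^k)$; $\mathcal F_k$ generated by all observations of episodes $1..k$; noises conditionally independent, zero mean, $\mathbb E[e^{\lambda\xi}\mid\mathcal F_{k-1}]\le e^{\lambda^2/4}$ for all real $\lambda$. Here the policies are those of OptPess-PrimalDual: $\lambda^1=0$, $\pi^k\in\arg\max_\pi\hat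 V_1^\pi(\mu;\tilde r^k,\hat P^k)-\frac{\lambda^k}{\eta^k}(\hat V_1^\pi(\mu;\tilde c^k,\hat P^k)-\tau)$, $\lambda^{k+1}=(\lambda^k+\hat V_1^{\pi^k}(\mu;\tilde c^k,\hat P^k)+\epsilon_k-\tau)_+$, $\eta^k=(\tau-c^0)H\sqrt k$. Estimates: $N_h^k(s,a)$ = visits of $(s,a)$ at step $h$ in episodes $1..k-1$; $\hat P_h^k,\hat r_h^k,\hat c_h^k$ empirical transition frequencies and means (denominator $N_h^k(s,a)\vee1$); $\delta\in(0,1)$, $Z:=\log(16|\mathcal S|^2|\mathcal A|HK/\delta)$, $\beta_h^k(s,a):=\sqrt{Z/(N_h^k(s,a)\vee1)}$; $\tilde r_h^k:=\hat r_h^k+(1+H|\mathcal S|)\beta_h^k$, $\tilde c_h^k:=\hat c_h^k-(1+H|\mathcal S|)\beta_h^k$, $\underline c_h^k:=\hat c_h^k+(1+H|\mathcal S|)\beta_h^k$; $\hat V_1^\pi(\mu;\tilde r^k,\hat P^k):=\min\{H,V_1^\pi(\mu;\tilde r^k,\hat P^k)\}$, $\hat V_1^\pi(\mu;\tilde c^k,\hat P^k):=\max\{0,V_1^\pi(\mu;\tilde c^k,\hat P^k)\}$. $\delta'=\delta/(16|\mathcal S|^2|\mathcal A|H)$, $\epsilon_k=5H^2\sqrt{|\mathcal S|^3|\mathcal A|}(\log\frac{k}{\delta'}+1)/\sqrt{k\log\frac{k}{\delta'}}$, and $C''$ is the smallest positive integer such that $\epsilon_k\le(\tau-c^0)/2$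 for all $k\ge C''$. Good event: with $q^{\pi^k}(s,a,h):=\mathbb P(S_h^k=s,A_h^k=a\mid\mathcal F_{k-1})$, for events $\mathcal G_k\in\mathcal F_{k-1}$ and $\delta_0$, $\mathcal E_{\mathcal G}(\delta_0)$ is the event that for all $K'\in[K]$, with $K'_{\mathcal G}=\sum_{k\le K'}\mathbb 1(\mathcal G_k)$: $\sum_{k\le K'}\sum_h\sum_{s,a}\frac{\mathbb 1(\mathcal G_k)q^{\pi^k}(s,a,h)}{N_h^k(s,a)\vee1}\le4H|\mathcal S||\mathcal A|+2H|\mathcal S||\mathcal A|\ln K'_{\mathcal G}+4\ln\frac{2HK}{\delta_0}$ and $\sum_{k\le K'}\sum_h\sum_{s,a}\frac{\mathbb 1(\mathcal G_k)q^{\pi^k}(s,a,h)}{\sqrt{N_h^k(s,a)\vee1}}\le6H|\mathcal S||\mathcal A|+2H\sqrt{|\mathcal S||\mathcal A|K'_{\mathcal G}}+2H|\mathcal S||\mathcal A|\ln K'_{\mathcal G}+5\ln\frac{2HK}{\delta_0}$; $\mathcal E_\Omega$ uses $\mathcal G_k=\Omega$, $\mathcal E_0$ uses $\mathcal G_k=\{V_1^{\pi^0}(\mu;\underline c^k,\hat P^k)\ge(\tau+c^0)/2\}$. $\mathcal E$ is the event that for all $k,h,s,s',a$: $|r_h(s,a)-\hat r_h^k(s,a)|\le\beta_h^k(s,a)$, $|c_h(s,a)-\hat c_h^k(s,a)|\le\beta_h^k(s,a)$, $|\hat P_h^k(s'\mid s,a)-P_h(s'\mid s,a)|\le\beta_h^k(s,a)$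 and $|\hat P_h^k(s'\mid s,a)-P_h(s'\mid s,a)|\le\sqrt{\frac{2P_h(s'\mid s,a)Z}{N_h^k(s,a)\vee1}}+\frac{Z}{3(N_h^k(s,a)\vee1)}$, intersected with $\mathcal E_\Omega(\delta/4)\cap\mathcal E_0(\delta/4)$. *)

theory Defs
  imports "HOL-Analysis.Analysis"
begin

(* Conventions: steps h in {1..H}, episodes k in {1..K}.
   Transition kernels are real-valued functions  P h s a s'  (so that the
   possibly sub-stochastic empirical kernel can be used as well);
   a randomized Markov policy is  pp h s a  = probability of action a in state s at step h. *)

type_synonym ('s,'a) kernel = "nat \<Rightarrow> 's \<Rightarrow> 'a \<Rightarrow> 's \<Rightarrow> real"
type_synonym ('s,'a) policy = "nat \<Rightarrow> 's \<Rightarrow> 'a \<Rightarrow> real"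
type_synonym ('s,'a) sfun = "nat \<Rightarrow> 's \<Rightarrow> 'a \<Rightarrow> real"

definition valid_policy :: "('s::finite,'a::finite) policy \<Rightarrow> bool" where
  "valid_policy pp \<longleftrightarrow> (\<forall>h s a. 0 \<le> pp h s a) \<and> (\<forall>h s. (\<Sum>a\<in>UNIV. pp h s a) = 1)"

(* Vrem m h s = value from step h with m remaining steps (h..h+m-1);
   V_h^pp(s; g, P') = Vrem (H+1-h) h s *)
primrec Vrem :: "('s::finite,'a::finite) kernel \<Rightarrow> ('s,'a) policy \<Rightarrow> ('s,'a) sfun
                 \<Rightarrow> nat \<Rightarrow> nat \<Rightarrow> 's \<Rightarrow> real" where
  "Vrem P pp g 0 h s = 0"
| "Vrem P pp g (Suc m) h s =
     (\<Sum>a\<in>UNIV. pp h s a * (g h s a + (\<Sum>s'\<in>UNIV. P h s a s' * Vrem P pp g m (Suc h) s')))"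

definition V1 :: "nat \<Rightarrow> ('s::finite \<Rightarrow> real) \<Rightarrow> ('s,'a::finite) kernel \<Rightarrow> ('s,'a) policy
                  \<Rightarrow> ('s,'a) sfun \<Rightarrow> real" where
  "V1 H mu P pp g = (\<Sum>s\<in>UNIV. mu s * Vrem P pp g H 1 s)"

(* state distribution at step m+1 under true kernel P *)
primrec sdist :: "('s::finite \<Rightarrow> real) \<Rightarrow> ('s,'a::finite) kernel \<Rightarrow> ('s,'a) policy
                  \<Rightarrow> nat \<Rightarrow> 's \<Rightarrow> real" where
  "sdist mu P pp 0 s = mu s"
| "sdist mu P pp (Suc m) s' =
     (\<Sum>s\<in>UNIV. \<Sum>a\<in>UNIV. sdist mu P pp m s * pp (Suc m) s a * P (Suc m) s a s')"

definition occ :: "('s::finite \<Rightarrow> real) \<Rightarrow> ('s,'a::finite) kernel \<Rightarrow> ('s,'a) policy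
                   \<Rightarrow> nat \<Rightarrow> 's \<Rightarrow> 'a \<Rightarrow> real" where
  "occ mu P pp h s a = sdist mu P pp (h - 1) s * pp h s a"

(* Empirical quantities from observed data: Sd k h, Ad k h, Rd k h, Cd k h
   = state, action, observed reward, observed cost at step h of episode k *)
definition visits :: "(nat \<Rightarrow> nat \<Rightarrow> 's) \<Rightarrow> (nat \<Rightarrow> nat \<Rightarrow> 'a) \<Rightarrow> nat \<Rightarrow> nat \<Rightarrow> 's \<Rightarrow> 'a \<Rightarrow> nat set" where
  "visits Sd Ad k h s a = {j\<in>{1..<k}. Sd j h = s \<and> Ad j h = a}"

definition Ncnt :: "(nat \<Rightarrow> nat \<Rightarrow> 's) \<Rightarrow> (nat \<Rightarrow> nat \<Rightarrow> 'a) \<Rightarrow> nat \<Rightarrow> nat \<Rightarrow> 's \<Rightarrow> 'a \<Rightarrow> nat" where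
  "Ncnt Sd Ad k h s a = card (visits Sd Ad k h s a)"

definition Nden :: "(nat \<Rightarrow> nat \<Rightarrow> 's) \<Rightarrow> (nat \<Rightarrow> nat \<Rightarrow> 'a) \<Rightarrow> nat \<Rightarrow> nat \<Rightarrow> 's \<Rightarrow> 'a \<Rightarrow> real" where
  "Nden Sd Ad k h s a = real (max (Ncnt Sd Ad k h s a) 1)"

definition Phat :: "(nat \<Rightarrow> nat \<Rightarrow> 's) \<Rightarrow> (nat \<Rightarrow> nat \<Rightarrow> 'a) \<Rightarrow> nat \<Rightarrow> ('s,'a) kernel" where
  "Phat Sd Ad k h s a s' =
     real (card {j\<in>visits Sd Ad k h s a. Sd j (Suc h) = s'}) / Nden Sd Ad k h s a"

definition emean :: "(nat \<Rightarrow> nat \<Rightarrow> 's) \<Rightarrow> (nat \<Rightarrow> nat \<Rightarrow> 'a) \<Rightarrow> (nat \<Rightarrow> nat \<Rightarrow> real)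
                     \<Rightarrow> nat \<Rightarrow> ('s,'a) sfun" where
  "emean Sd Ad Xd k h s a = (\<Sum>j\<in>visits Sd Ad k h s a. Xd j h) / Nden Sd Ad k h s a"

definition Zc :: "nat \<Rightarrow> nat \<Rightarrow> real \<Rightarrow> 's::finite itself \<Rightarrow> 'a::finite itself \<Rightarrow> real" where
  "Zc H K \<delta> _ _ = ln (16 * real (CARD('s))^2 * real (CARD('a)) * real H * real K / \<delta>)"

definition beta :: "real \<Rightarrow> (nat \<Rightarrow> nat \<Rightarrow> 's) \<Rightarrow> (nat \<Rightarrow> nat \<Rightarrow> 'a) \<Rightarrow> nat \<Rightarrow> ('s,'a) sfun" where
  "beta Z Sd Ad k h s a = sqrt (Z / Nden Sd Ad k h s a)"

definition bonus_coef :: "nat \<Rightarrow> 's::finite itself \<Rightarrow> real" where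
  "bonus_coef H _ = 1 + real H * real (CARD('s))"

definition rtil :: "nat \<Rightarrow> real \<Rightarrow> (nat \<Rightarrow> nat \<Rightarrow> 's::finite) \<Rightarrow> (nat \<Rightarrow> nat \<Rightarrow> 'a) \<Rightarrow> (nat \<Rightarrow> nat \<Rightarrow> real)
                    \<Rightarrow> nat \<Rightarrow> ('s,'a) sfun" where
  "rtil H Z Sd Ad Rd k h s a =
     emean Sd Ad Rd k h s a + bonus_coef H TYPE('s) * beta Z Sd Ad k h s a"

definition ctil :: "nat \<Rightarrow> real \<Rightarrow> (nat \<Rightarrow> nat \<Rightarrow> 's::finite) \<Rightarrow> (nat \<Rightarrow> nat \<Rightarrow> 'a) \<Rightarrow> (nat \<Rightarrow> nat \<Rightarrow> real)
                    \<Rightarrow> nat \<Rightarrow> ('s,'a) sfun" where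
  "ctil H Z Sd Ad Cd k h s a =
     emean Sd Ad Cd k h s a - bonus_coef H TYPE('s) * beta Z Sd Ad k h s a"

definition cund :: "nat \<Rightarrow> real \<Rightarrow> (nat \<Rightarrow> nat \<Rightarrow> 's::finite) \<Rightarrow> (nat \<Rightarrow> nat \<Rightarrow> 'a) \<Rightarrow> (nat \<Rightarrow> nat \<Rightarrow> real)
                    \<Rightarrow> nat \<Rightarrow> ('s,'a) sfun" where
  "cund H Z Sd Ad Cd k h s a =
     emean Sd Ad Cd k h s a + bonus_coef H TYPE('s) * beta Z Sd Ad k h s a"

definition hatVr :: "nat \<Rightarrow> real \<Rightarrow> ('s::finite \<Rightarrow> real) \<Rightarrow> (nat \<Rightarrow> nat \<Rightarrow> 's) \<Rightarrow> (nat \<Rightarrow> nat \<Rightarrow> 'a::finite)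
                     \<Rightarrow> (nat \<Rightarrow> nat \<Rightarrow> real) \<Rightarrow> nat \<Rightarrow> ('s,'a) policy \<Rightarrow> real" where
  "hatVr H Z mu Sd Ad Rd k pp = min (real H) (V1 H mu (Phat Sd Ad k) pp (rtil H Z Sd Ad Rd k))"

definition hatVc :: "nat \<Rightarrow> real \<Rightarrow> ('s::finite \<Rightarrow> real) \<Rightarrow> (nat \<Rightarrow> nat \<Rightarrow> 's) \<Rightarrow> (nat \<Rightarrow> nat \<Rightarrow> 'a::finite)
                     \<Rightarrow> (nat \<Rightarrow> nat \<Rightarrow> real) \<Rightarrow> nat \<Rightarrow> ('s,'a) policy \<Rightarrow> real" where
  "hatVc H Z mu Sd Ad Cd k pp = max 0 (V1 H mu (Phat Sd Ad k) pp (ctil H Z Sd Ad Cd k))"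

definition epsk :: "nat \<Rightarrow> real \<Rightarrow> 's::finite itself \<Rightarrow> 'a::finite itself \<Rightarrow> nat \<Rightarrow> real" where
  "epsk H \<delta> _ _ k =
     (let \<delta>' = \<delta> / (16 * real (CARD('s))^2 * real (CARD('a)) * real H) in
      5 * real H ^ 2 * sqrt (real (CARD('s)) ^ 3 * real (CARD('a))) * (ln (real k / \<delta>') + 1)
        / sqrt (real k * ln (real k / \<delta>')))"

definition Cpp :: "nat \<Rightarrow> real \<Rightarrow> real \<Rightarrow> real \<Rightarrow> 's::finite itself \<Rightarrow> 'a::finite itself \<Rightarrow> nat" where
  "Cpp H \<delta> \<tau> c0 ts ta =
     (LEAST n::nat. 0 < n \<and> (\<forall>k\<ge>n. epsk H \<delta> ts ta k \<le> (\<tau> - c0) / 2))"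

(* dual variable: lam m = lambda^{m+1} *)
primrec lam :: "nat \<Rightarrow> real \<Rightarrow> real \<Rightarrow> real \<Rightarrow> ('s::finite \<Rightarrow> real) \<Rightarrow> (nat \<Rightarrow> nat \<Rightarrow> 's)
                \<Rightarrow> (nat \<Rightarrow> nat \<Rightarrow> 'a::finite) \<Rightarrow> (nat \<Rightarrow> nat \<Rightarrow> real) \<Rightarrow> (nat \<Rightarrow> ('s,'a) policy)
                \<Rightarrow> nat \<Rightarrow> real" where
  "lam H Z \<delta> \<tau> mu Sd Ad Cd pol 0 = 0"
| "lam H Z \<delta> \<tau> mu Sd Ad Cd pol (Suc m) =
     max 0 (lam H Z \<delta> \<tau> mu Sd Ad Cd pol m + hatVc H Z mu Sd Ad Cd (Suc m) (pol (Suc m))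
            + epsk H \<delta> TYPE('s) TYPE('a) (Suc m) - \<tau>)"

definition optpess_policies ::
  "nat \<Rightarrow> nat \<Rightarrow> real \<Rightarrow> real \<Rightarrow> real \<Rightarrow> ('s::finite \<Rightarrow> real) \<Rightarrow> (nat \<Rightarrow> nat \<Rightarrow> 's)
   \<Rightarrow> (nat \<Rightarrow> nat \<Rightarrow> 'a::finite) \<Rightarrow> (nat \<Rightarrow> nat \<Rightarrow> real) \<Rightarrow> (nat \<Rightarrow> nat \<Rightarrow> real)
   \<Rightarrow> (nat \<Rightarrow> ('s,'a) policy) \<Rightarrow> bool" where
  "optpess_policies H K \<delta> \<tau> c0 mu Sd Ad Rd Cd pol \<longleftrightarrow>
     (let Z = Zc H K \<delta> TYPE('s) TYPE('a);
          L = (\<lambda>k pp. hatVr H Z mu Sd Ad Rd k pp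
                 - lam H Z \<delta> \<tau> mu Sd Ad Cd pol (k - 1) / ((\<tau> - c0) * real H * sqrt (real k))
                   * (hatVc H Z mu Sd Ad Cd k pp - \<tau>))
      in \<forall>k\<in>{1..K}. valid_policy (pol k) \<and>
                    (\<forall>pp. valid_policy pp \<longrightarrow> L k pp \<le> L k (pol k)))"

definition event_EG ::
  "nat \<Rightarrow> nat \<Rightarrow> ('s::finite \<Rightarrow> real) \<Rightarrow> ('s,'a::finite) kernel \<Rightarrow> (nat \<Rightarrow> nat \<Rightarrow> 's)
   \<Rightarrow> (nat \<Rightarrow> nat \<Rightarrow> 'a) \<Rightarrow> (nat \<Rightarrow> ('s,'a) policy) \<Rightarrow> (nat \<Rightarrow> bool) \<Rightarrow> real \<Rightarrow> bool" where
  "event_EG H K mu P Sd Ad pol G \<delta>0 \<longleftrightarrow>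
     (let SA = real (CARD('s)) * real (CARD('a)) in
      \<forall>K'\<in>{1..K}.
        (let KG = real (card {k\<in>{1..K'}. G k}) in
         (\<Sum>k\<in>{1..K'}. \<Sum>h\<in>{1..H}. \<Sum>s\<in>UNIV. \<Sum>a\<in>UNIV.
             (if G k then occ mu P (pol k) h s a else 0) / Nden Sd Ad k h s a)
           \<le> 4 * real H * SA + 2 * real H * SA * ln KG + 4 * ln (2 * real H * real K / \<delta>0)
         \<and>
         (\<Sum>k\<in>{1..K'}. \<Sum>h\<in>{1..H}. \<Sum>s\<in>UNIV. \<Sum>a\<in>UNIV.
             (if G k then occ mu P (pol k) h s a else 0) / sqrt (Nden Sd Ad k h s a))
           \<le> 6 * real H * SA + 2 * real H * sqrt (SA * KG) + 2 * real H * SA * ln KG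
              + 5 * ln (2 * real H * real K / \<delta>0)))"

(* the good event E (as a property of an observed sample path) *)
definition good_event ::
  "nat \<Rightarrow> nat \<Rightarrow> real \<Rightarrow> real \<Rightarrow> ('s::finite \<Rightarrow> real) \<Rightarrow> ('s,'a::finite) kernel
   \<Rightarrow> ('s,'a) sfun \<Rightarrow> ('s,'a) sfun \<Rightarrow> ('s,'a) policy
   \<Rightarrow> (nat \<Rightarrow> nat \<Rightarrow> 's) \<Rightarrow> (nat \<Rightarrow> nat \<Rightarrow> 'a) \<Rightarrow> (nat \<Rightarrow> nat \<Rightarrow> real) \<Rightarrow> (nat \<Rightarrow> nat \<Rightarrow> real)
   \<Rightarrow> (nat \<Rightarrow> ('s,'a) policy) \<Rightarrow> bool" where
  "good_event H K \<delta> \<tau> mu P r c pz Sd Ad Rd Cd pol \<longleftrightarrow>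
     (let Z = Zc H K \<delta> TYPE('s) TYPE('a);
          c0 = V1 H mu P pz c in
      (\<forall>k\<in>{1..K}. \<forall>h\<in>{1..H}. \<forall>s a s'.
          \<bar>r h s a - emean Sd Ad Rd k h s a\<bar> \<le> beta Z Sd Ad k h s a
        \<and> \<bar>c h s a - emean Sd Ad Cd k h s a\<bar> \<le> beta Z Sd Ad k h s a
        \<and> \<bar>Phat Sd Ad k h s a s' - P h s a s'\<bar> \<le> beta Z Sd Ad k h s a
        \<and> \<bar>Phat Sd Ad k h s a s' - P h s a s'\<bar>
            \<le> sqrt (2 * P h s a s' * Z / Nden Sd Ad k h s a) + Z / (3 * Nden Sd Ad k h s a))
      \<and> event_EG H K mu P Sd Ad pol (\<lambda>k. True) (\<delta> / 4)
      \<and> event_EG H K mu P Sd Ad pol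
          (\<lambda>k. V1 H mu (Phat Sd Ad k) pz (cund H Z Sd Ad Cd k) \<ge> (\<tau> + c0) / 2) (\<delta> / 4))"

end

theory Submission
  imports Defs
begin

text \<open>The pessimistic cost \<open>ctil\<close> undercuts the true cost by \<open>H |S| \<beta>\<close>, while replacing
  the true kernel by the empirical one changes the expected continuation value by at most
  \<open>|S| \<beta> H\<close>, because every true value function takes values in \<open>[0, H]\<close>. Backward induction
  over the steps therefore shows that the estimated value never exceeds the true one, and the
  clipping at \<open>0\<close> is harmless since true cost values are nonnegative.\<close>

lemma Vrem_nonneg:
  assumes "\<And>h s a s'. 0 \<le> P h s a s'" and "\<And>h s a. 0 \<le> pp h s a" and "\<And>h s a. 0 \<le> g h s a"
  shows "0 \<le> Vrem P pp g m h s"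
  using assms by (induction m arbitrary: h s)
    (auto intro!: sum_nonneg mult_nonneg_nonneg add_nonneg_nonneg)

lemma Vrem_nonpos:
  assumes "\<And>h s a s'. 0 \<le> P h s a s'" and "\<And>h s a. 0 \<le> pp h s a" and "\<And>h s a. g h s a \<le> 0"
  shows "Vrem P pp g m h s \<le> 0"
proof (induction m arbitrary: h s)
  case (Suc m)
  have "(\<Sum>s'\<in>UNIV. P h s a s' * Vrem P pp g m (Suc h) s') \<le> 0" for a
    using assms(1) Suc.IH by (intro sum_nonpos mult_nonneg_nonpos)
  then have "g h s a + (\<Sum>s'\<in>UNIV. P h s a s' * Vrem P pp g m (Suc h) s') \<le> 0" for a
    using assms(3) by (meson add_nonpos_nonpos)
  then show ?case
    using assms(2) by (simp add: sum_nonpos mult_nonneg_nonpos)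
qed simp

lemma Vrem_le_steps:
  assumes P: "\<And>h s a s'. 0 \<le> P h s a s'" "\<And>h s a. (\<Sum>s'\<in>UNIV. P h s a s') = 1"
    and pp: "valid_policy pp" and g: "\<And>h s a. g h s a \<le> 1"
  shows "Vrem P pp g m h s \<le> real m"
proof (induction m arbitrary: h s)
  case (Suc m)
  have pp_nonneg: "\<And>h s a. 0 \<le> pp h s a" and pp_sum: "\<And>h s. (\<Sum>a\<in>UNIV. pp h s a) = 1"
    using pp unfolding valid_policy_def by auto
  have "(\<Sum>s'\<in>UNIV. P h s a s' * Vrem P pp g m (Suc h) s') \<le> real m" for a
  proof -
    have "(\<Sum>s'\<in>UNIV. P h s a s' * Vrem P pp g m (Suc h) s') \<le> (\<Sum>s'\<in>UNIV. P h s a s' * real m)"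
      using P(1) Suc.IH by (intro sum_mono mult_left_mono)
    also have "\<dots> = real m"
      using P(2) by (simp add: sum_distrib_right[symmetric])
    finally show ?thesis .
  qed
  then have "Vrem P pp g (Suc m) h s \<le> (\<Sum>a\<in>UNIV. pp h s a * (1 + real m))"
    using g pp_nonneg by (auto intro!: sum_mono mult_left_mono add_mono)
  also have "\<dots> = real (Suc m)"
    using pp_sum by (simp add: sum_distrib_right[symmetric])
  finally show ?case .
qed simp

lemma sum_mult_diff_le_card:
  fixes p q V :: "'s::finite \<Rightarrow> real"
  assumes pq: "\<And>s. \<bar>p s - q s\<bar> \<le> b" and V: "\<And>s. 0 \<le> V s" "\<And>s. V s \<le> B"
  shows "(\<Sum>s\<in>UNIV. p s * V s) - (\<Sum>s\<in>UNIV. q s * V s) \<le> real CARD('s) * (b * B)"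
proof -
  have b_nonneg: "0 \<le> b"
    using pq[of undefined] by linarith
  have "(p s - q s) * V s \<le> b * B" for s
  proof -
    have "(p s - q s) * V s \<le> \<bar>p s - q s\<bar> * V s"
      using V(1) by (intro mult_right_mono) auto
    also have "\<dots> \<le> b * B"
      using pq V b_nonneg by (intro mult_mono) auto
    finally show ?thesis .
  qed
  then have "(\<Sum>s\<in>UNIV. (p s - q s) * V s) \<le> (\<Sum>s\<in>(UNIV::'s set). b * B)"
    by (intro sum_mono)
  then show ?thesis
    by (simp add: sum_subtractf left_diff_distrib)
qed

lemma Vrem_pessimistic_le:
  fixes P P' :: "('s::finite,'a::finite) kernel"
  assumes P: "\<And>h s a s'. 0 \<le> P h s a s'" "\<And>h s a. (\<Sum>s'\<in>UNIV. P h s a s') = 1"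
    and P': "\<And>h s a s'. 0 \<le> P' h s a s'"
    and g: "\<And>h s a. 0 \<le> g h s a" "\<And>h s a. g h s a \<le> 1"
    and pp: "valid_policy pp"
    and cost: "\<And>h s a. h \<in> {1..H} \<Longrightarrow> g' h s a \<le> g h s a - real H * real CARD('s) * b h s a"
    and kernel: "\<And>h s a s'. h \<in> {1..H} \<Longrightarrow> \<bar>P' h s a s' - P h s a s'\<bar> \<le> b h s a"
    and h: "1 \<le> h" "h + m \<le> H + 1"
  shows "Vrem P' pp g' m h s \<le> Vrem P pp g m h s"
  using h
proof (induction m arbitrary: h s)
  case (Suc m)
  have pp_nonneg: "\<And>h s a. 0 \<le> pp h s a"
    using pp unfolding valid_policy_def by auto
  let ?V = "Vrem P pp g m (Suc h)" and ?V' = "Vrem P' pp g' m (Suc h)"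
  have hH: "h \<in> {1..H}" and mH: "real m \<le> real H"
    using Suc.prems by auto
  have "g' h s a + (\<Sum>s'\<in>UNIV. P' h s a s' * ?V' s') \<le> g h s a + (\<Sum>s'\<in>UNIV. P h s a s' * ?V s')"
    for a
  proof -
    have "(\<Sum>s'\<in>UNIV. P' h s a s' * ?V' s') \<le> (\<Sum>s'\<in>UNIV. P' h s a s' * ?V s')"
      using P' Suc.IH Suc.prems by (intro sum_mono mult_left_mono) auto
    moreover have "(\<Sum>s'\<in>UNIV. P' h s a s' * ?V s') - (\<Sum>s'\<in>UNIV. P h s a s' * ?V s')
        \<le> real CARD('s) * (b h s a * real H)"
      using kernel[OF hH] Vrem_nonneg[OF P(1) pp_nonneg g(1)]
        order_trans[OF Vrem_le_steps[OF P pp g(2)] mH]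
      by (rule sum_mult_diff_le_card)
    ultimately show ?thesis
      using cost[OF hH, of s a] by (simp add: algebra_simps)
  qed
  then show ?case
    using pp_nonneg by (auto intro!: sum_mono mult_left_mono)
qed simp

lemma V1_mono:
  assumes "\<And>s. 0 \<le> mu s" and "\<And>s. Vrem P pp g H 1 s \<le> Vrem P' pp' g' H 1 s"
  shows "V1 H mu P pp g \<le> V1 H mu P' pp' g'"
  unfolding V1_def using assms by (intro sum_mono mult_left_mono)

lemma V1_nonneg:
  assumes "\<And>s. 0 \<le> mu s" and "\<And>s. 0 \<le> Vrem P pp g H 1 s"
  shows "0 \<le> V1 H mu P pp g"
  unfolding V1_def using assms by (intro sum_nonneg mult_nonneg_nonneg)

lemma Zc_nonneg:
  assumes "1 \<le> H" "1 \<le> K" "0 < \<delta>" "\<delta> \<le> 1"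
  shows "0 \<le> Zc H K \<delta> TYPE('s::finite) TYPE('a::finite)"
proof -
  define N where "N = 16 * CARD('s)^2 * CARD('a) * H * K"
  have "1 \<le> N"
    unfolding N_def using assms(1,2) by simp
  then have N: "1 \<le> real N"
    by (metis of_nat_1 of_nat_le_iff)
  have "real N * \<delta> \<le> real N"
    using N assms(4) by (intro mult_left_le) auto
  then have "real N \<le> real N / \<delta>"
    using assms(3) by (intro mult_imp_le_div_pos)
  then have "0 \<le> ln (real N / \<delta>)"
    using N by (intro ln_ge_zero) linarith
  then show ?thesis
    unfolding Zc_def N_def by simp
qed

lemma Phat_nonneg: "0 \<le> Phat Sd Ad k h s a s'"
  by (simp add: Phat_def Nden_def)

lemma ctil_0_nonpos:
  assumes "0 \<le> Z"
  shows "ctil H Z Sd Ad Cd 0 h s a \<le> 0"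
  using assms
  by (simp add: ctil_def emean_def visits_def beta_def Nden_def Ncnt_def bonus_coef_def)

lemma good_event_ctil_le:
  fixes P :: "('s::finite,'a::finite) kernel"
  assumes "good_event H K \<delta> \<tau> mu P r c pz Sd Ad Rd Cd pol" "k \<in> {1..K}" "h \<in> {1..H}"
  shows "ctil H (Zc H K \<delta> TYPE('s) TYPE('a)) Sd Ad Cd k h s a
    \<le> c h s a - real H * real CARD('s) * beta (Zc H K \<delta> TYPE('s) TYPE('a)) Sd Ad k h s a"
proof -
  have "\<bar>c h s a - emean Sd Ad Cd k h s a\<bar> \<le> beta (Zc H K \<delta> TYPE('s) TYPE('a)) Sd Ad k h s a"
    using assms unfolding good_event_def Let_def by blast
  then show ?thesis
    unfolding ctil_def bonus_coef_def by (simp add: algebra_simps)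
qed

lemma good_event_Phat_close:
  fixes P :: "('s::finite,'a::finite) kernel"
  assumes "good_event H K \<delta> \<tau> mu P r c pz Sd Ad Rd Cd pol" "k \<in> {1..K}" "h \<in> {1..H}"
  shows "\<bar>Phat Sd Ad k h s a s' - P h s a s'\<bar> \<le> beta (Zc H K \<delta> TYPE('s) TYPE('a)) Sd Ad k h s a"
  using assms unfolding good_event_def Let_def by blast

theorem lemmaC1:
  fixes H K :: nat and \<delta> \<tau> c0 :: real
    and mu :: "'s::finite \<Rightarrow> real" and P :: "('s,'a::finite) kernel"
    and r c :: "('s,'a) sfun" and pz :: "('s,'a) policy"
    and Sd :: "nat \<Rightarrow> nat \<Rightarrow> 's" and Ad :: "nat \<Rightarrow> nat \<Rightarrow> 'a"
    and Rd Cd :: "nat \<Rightarrow> nat \<Rightarrow> real"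
    and pol :: "nat \<Rightarrow> ('s,'a) policy"
    and pp :: "('s,'a) policy" and k :: nat
  assumes H: "1 \<le> H" and K: "1 \<le> K"
    and mu: "\<forall>s. 0 \<le> mu s" "(\<Sum>s\<in>UNIV. mu s) = 1"
    and P: "\<forall>h s a s'. 0 \<le> P h s a s'" "\<forall>h s a. (\<Sum>s'\<in>UNIV. P h s a s') = 1"
    and r: "\<forall>h s a. 0 \<le> r h s a \<and> r h s a \<le> 1"
    and c: "\<forall>h s a. 0 \<le> c h s a \<and> c h s a \<le> 1"
    and tau: "0 < \<tau>" "\<tau> \<le> real H"
    and delta: "0 < \<delta>" "\<delta> < 1"
    and pz: "valid_policy pz" "V1 H mu P pz c = c0" "c0 < \<tau>"
    and alg: "optpess_policies H K \<delta> \<tau> c0 mu Sd Ad Rd Cd pol"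
    and E: "good_event H K \<delta> \<tau> mu P r c pz Sd Ad Rd Cd pol"
    and k: "Cpp H \<delta> \<tau> c0 TYPE('s) TYPE('a) \<le> k" "k \<le> K"
    and pp: "valid_policy pp"
  shows "hatVc H (Zc H K \<delta> TYPE('s) TYPE('a)) mu Sd Ad Cd k pp \<le> V1 H mu P pp c"
proof -
  let ?Z = "Zc H K \<delta> TYPE('s) TYPE('a)"
  have pp_nonneg: "\<And>h s a. 0 \<le> pp h s a"
    using pp unfolding valid_policy_def by auto
  have true_nonneg: "0 \<le> Vrem P pp c H 1 s" for s
    using P c pp_nonneg by (intro Vrem_nonneg) auto
  have "Vrem (Phat Sd Ad k) pp (ctil H ?Z Sd Ad Cd k) H 1 s \<le> Vrem P pp c H 1 s" for s
  proof (cases "k = 0")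
    case True
    \<comment> \<open>Possible only if the \<open>LEAST\<close> defining \<open>Cpp\<close> has no witness; the good event
      then says nothing, but with no data \<open>Phat\<close> vanishes and \<open>ctil\<close> is the bare negative bonus.\<close>
    have "0 \<le> ?Z"
      using delta by (intro Zc_nonneg[OF H K]) auto
    then have "Vrem (Phat Sd Ad k) pp (ctil H ?Z Sd Ad Cd k) H 1 s \<le> 0"
      unfolding True by (intro Vrem_nonpos Phat_nonneg pp_nonneg ctil_0_nonpos)
    then show ?thesis
      using true_nonneg by (rule order_trans)
  next
    case False
    then have "k \<in> {1..K}" using k by auto
    then show ?thesis
      using P c pp good_event_ctil_le[OF E] good_event_Phat_close[OF E]
      by (intro Vrem_pessimistic_le[where H = H and b = "beta ?Z Sd Ad k"] Phat_nonneg) auto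
  qed
  then have "V1 H mu (Phat Sd Ad k) pp (ctil H ?Z Sd Ad Cd k) \<le> V1 H mu P pp c"
    using mu by (intro V1_mono) auto
  moreover have "0 \<le> V1 H mu P pp c"
    using mu true_nonneg by (intro V1_nonneg) auto
  ultimately show ?thesis
    unfolding hatVc_def by simp
qed

end
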